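(* Let $R>0$ and let $A\subset\mathbb{R}^d$ be an $R$-supported body. Then $A$ is an $R$-body if and only if $$A=A_R\cap\Big(\bigcap_{a\in\partial A}C^a_{\mathcal{N}_R(A,a)}\Big).$$
   Context: A body is a nonempty closed subset of $\mathbb{R}^d$; $S^{d-1}$ is the unit sphere; $B(x)=\{y:|y-x|<R\}$; $A_R=\{x:\operatorname{dist}(x,A)<R\}$. A body $A$ is an $R$-body if every $y\notin A$ lies in some open ball of radius $R$ disjoint from $A$ (so $\mathbb{R}^d$ is an $R$-body). For $a\in\partial A$, $\mathcal{N}_R(A,a)=\{v\in S^{d-1}: A\cap B(a+Rv)=\emptyset\}$; $A$ is $R$-supported if $\mathcal{N}_R(A,a)\ne\emptyset$ for all $a\in\partial A$. For nonempty closed $\mathcal K\subset S^{d-1}$ and $x\in\mathbb{R}^d$, $C^x_{\mathcal K}=\bigcap_{v\in\mathcal K}(\mathbb{R}^d\setminus B(x+Rv))$. An intersection over an empty index set is $\mathbb{R}^d$. *)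

theory Defs
  imports "HOL-Analysis.Analysis"
begin

definition body :: "'a::euclidean_space set \<Rightarrow> bool" where
  "body A \<longleftrightarrow> A \<noteq> {} \<and> closed A"

definition unit_sphere :: "'a::euclidean_space set" where
  "unit_sphere = {v. norm v = 1}"

definition parallel_nbhd :: "real \<Rightarrow> 'a::euclidean_space set \<Rightarrow> 'a set" where
  "parallel_nbhd R A = {x. infdist x A < R}"

definition R_body :: "real \<Rightarrow> 'a::euclidean_space set \<Rightarrow> bool" where
  "R_body R A \<longleftrightarrow> body A \<and> (\<forall>y. y \<notin> A \<longrightarrow> (\<exists>c. y \<in> ball c R \<and> ball c R \<inter> A = {}))"

definition normal_cone_R :: "real \<Rightarrow> 'a::euclidean_space set \<Rightarrow> 'a \<Rightarrow> 'a set" where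
  "normal_cone_R R A a = {v \<in> unit_sphere. A \<inter> ball (a + R *\<^sub>R v) R = {}}"

definition R_supported :: "real \<Rightarrow> 'a::euclidean_space set \<Rightarrow> bool" where
  "R_supported R A \<longleftrightarrow> body A \<and> (\<forall>a \<in> frontier A. normal_cone_R R A a \<noteq> {})"

text \<open>C^x_K = intersection over v in K of complements of B(x + R v); equals UNIV if K is empty.\<close>
definition C_set :: "real \<Rightarrow> 'a::euclidean_space set \<Rightarrow> 'a \<Rightarrow> 'a set" where
  "C_set R K x = (\<Inter>v \<in> K. - ball (x + R *\<^sub>R v) R)"

end

theory Submission
  imports Defs
begin

text \<open>
  The inclusion of A in the right-hand side is immediate, and every point outside one of
  the sets C is covered by a ball of radius R missing A. Conversely, let y be a point of
  the right-hand side outside A and let B(c) be a ball of radius R through y missing A.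
  Sliding the centre from c towards y, the distance to A drops from at least R to below R,
  so by continuity some ball B(z) of radius R through y lies at distance exactly R from A.
  It touches A at a nearest point a, which lies on the boundary, and (z - a)/R is then a
  unit normal in N_R(A, a); hence y is not in C^a, a contradiction.
\<close>

lemma disjoint_ball_iff_le_infdist:
  fixes A :: "'a::{real_normed_vector, heine_borel} set"
  assumes "closed A" "A \<noteq> {}"
  shows "ball c r \<inter> A = {} \<longleftrightarrow> r \<le> infdist c A"
proof
  assume "ball c r \<inter> A = {}"
  moreover obtain a where "a \<in> A" "infdist c A = dist c a"
    using infdist_attains_inf[OF assms] by blast
  ultimately show "r \<le> infdist c A" by (auto simp: not_less[symmetric])
next
  assume "r \<le> infdist c A"
  then show "ball c r \<inter> A = {}"
    using infdist_le[of _ A c] by (fastforce simp: not_less[symmetric])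
qed

lemma exists_ball_at_infdist_radius:
  fixes A :: "'a::{real_normed_vector, heine_borel} set"
  assumes "closed A" "A \<noteq> {}" "ball c r \<inter> A = {}" "y \<in> ball c r" "infdist y A < r"
  shows "\<exists>z. y \<in> ball z r \<and> infdist z A = r"
proof -
  define f where "f t = infdist (c + t *\<^sub>R (y - c)) A" for t :: real
  have "continuous_on {0..1} f" unfolding f_def by (intro continuous_intros)
  moreover have "f 1 \<le> r" "r \<le> f 0"
    using assms disjoint_ball_iff_le_infdist[OF assms(1,2)] by (auto simp: f_def)
  ultimately obtain t where t: "0 \<le> t" "t \<le> 1" "f t = r"
    using IVT2'[of f 1 r 0] by auto
  define z where "z = c + t *\<^sub>R (y - c)"
  have "y - z = (1 - t) *\<^sub>R (y - c)" by (simp add: z_def algebra_simps)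
  then have "dist z y = (1 - t) * dist c y"
    using t by (simp add: dist_norm norm_minus_commute)
  also have "\<dots> \<le> dist c y" using t by (simp add: mult_left_le_one_le)
  also have "\<dots> < r" using assms(4) by simp
  finally show ?thesis using t(3) by (auto simp: f_def z_def)
qed

lemma infdist_eq_radius_imp_normal_cone:
  fixes A :: "'a::euclidean_space set"
  assumes "closed A" "A \<noteq> {}" "r > 0" "infdist z A = r"
  shows "\<exists>a \<in> frontier A. \<exists>v \<in> normal_cone_R r A a. z = a + r *\<^sub>R v"
proof -
  obtain a where a: "a \<in> A" "dist z a = r"
    using infdist_attains_inf[OF assms(1,2)] assms(4) by metis
  have disjoint: "A \<inter> ball z r = {}"
    using disjoint_ball_iff_le_infdist[OF assms(1,2)] assms(4) by blast
  have "a \<in> closure (ball z r)" using a assms(3) by simp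
  also have "\<dots> \<subseteq> closure (- A)" using disjoint by (intro closure_mono) auto
  finally have "a \<in> frontier A"
    using a(1) closure_subset by (auto simp: frontier_closures)
  define v where "v = (1 / r) *\<^sub>R (z - a)"
  have z: "z = a + r *\<^sub>R v" using assms(3) by (simp add: v_def)
  have "norm v = 1" using assms(3) a by (simp add: v_def dist_norm)
  then have "v \<in> normal_cone_R r A a"
    using disjoint z by (simp add: normal_cone_R_def unit_sphere_def)
  with \<open>a \<in> frontier A\<close> z show ?thesis by blast
qed

lemma subset_parallel_nbhd: "r > 0 \<Longrightarrow> A \<subseteq> parallel_nbhd r A"
  by (auto simp: parallel_nbhd_def)

lemma subset_C_set_normal_cone: "A \<subseteq> C_set r (normal_cone_R r A a) a"
  by (auto simp: C_set_def normal_cone_R_def)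

lemma not_in_C_set_normal_cone_imp_ball:
  assumes "y \<notin> C_set r (normal_cone_R r A a) a"
  shows "\<exists>c. y \<in> ball c r \<and> ball c r \<inter> A = {}"
proof -
  obtain v where "v \<in> normal_cone_R r A a" "y \<in> ball (a + r *\<^sub>R v) r"
    using assms by (auto simp: C_set_def)
  then show ?thesis by (auto simp: normal_cone_R_def)
qed

lemma not_in_parallel_nbhd_imp_ball:
  fixes A :: "'a::euclidean_space set"
  assumes "closed A" "A \<noteq> {}" "r > 0" "y \<notin> parallel_nbhd r A"
  shows "\<exists>c. y \<in> ball c r \<and> ball c r \<inter> A = {}"
  using assms disjoint_ball_iff_le_infdist[OF assms(1,2), of y r]
  by (auto simp: parallel_nbhd_def)

theorem mainTheorem13:
  fixes A :: "'a::euclidean_space set" and R :: real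
  assumes "R > 0" and "R_supported R A"
  shows "R_body R A \<longleftrightarrow>
    A = parallel_nbhd R A \<inter> (\<Inter>a \<in> frontier A. C_set R (normal_cone_R R A a) a)"
    (is "_ \<longleftrightarrow> A = ?rhs")
proof
  have A: "closed A" "A \<noteq> {}" using assms(2) by (auto simp: R_supported_def body_def)
  assume body: "R_body R A"
  have "?rhs \<subseteq> A"
  proof
    fix y assume y: "y \<in> ?rhs"
    show "y \<in> A"
    proof (rule ccontr)
      assume "y \<notin> A"
      then obtain c where "y \<in> ball c R" "ball c R \<inter> A = {}"
        using body by (auto simp: R_body_def)
      moreover have "infdist y A < R" using y by (auto simp: parallel_nbhd_def)
      ultimately obtain z where "y \<in> ball z R" "infdist z A = R"
        using exists_ball_at_infdist_radius[OF A] by blast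
      moreover obtain a v where "a \<in> frontier A" "v \<in> normal_cone_R R A a" "z = a + R *\<^sub>R v"
        using infdist_eq_radius_imp_normal_cone[OF A assms(1) \<open>infdist z A = R\<close>] by blast
      ultimately show False using y by (auto simp: C_set_def)
    qed
  qed
  then show "A = ?rhs"
    using subset_parallel_nbhd[OF assms(1)] subset_C_set_normal_cone by blast
next
  have A: "body A" using assms(2) by (auto simp: R_supported_def)
  assume eq: "A = ?rhs"
  show "R_body R A"
    using eq A not_in_parallel_nbhd_imp_ball[OF _ _ assms(1)]
      not_in_C_set_normal_cone_imp_ball
    unfolding R_body_def body_def by blast
qed

end
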